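(* Suppose the jobs of an instance of $Pm||\sum w_jU_j$ are indexed so that $d_1\le d_2\le\dots\le d_n$, and consider a feasible solution in the discarding formulation: a set $S\subseteq J$ of scheduled jobs with a proper schedule $\sigma$ of $S$ in which every scheduled job $j$ satisfies $C_j(\sigma)\le d_j$, the cost being $\sum_{j\in J\setminus S}w_j$. Let $\sigma'$ be the intermediate schedule obtained from $\sigma$ by an admissible swap at some step $j^*\in S$ between machines $M_h$ and $M_i$. Then $\sigma'$ schedules the same set $S$ with every scheduled job completing by its due date; in particular $\sum w_jU_j(\sigma')\le\sum w_jU_j(\sigma)$.
   Context: Jobs $J=\{1,\dots,n\}$, job $j$ with positive integer processing time $p_j$, nonnegative integer weight $w_j$ and integer due date $d_j$; $m$ identical machines $M_1,\dots,M_m$; $p_{\max}=\max_{j\in J} p_j$, $P(X)=\sum_{j\in X}p_j$. In the discarding formulation of $Pm||\sum w_jU_j$, tardy jobs are discarded and incur penalty $w_j$: a solution schedules a subset $S$ of jobs, each completing by its due date, and $\sum w_jU_j$ equals the total weight of discarded jobs. A proper schedule $\sigma$ of $S$ is a partition $S=S_1(\sigma)\cup\dots\cup S_m(\sigma)$, the jobs of $S_i(\sigma)$ processed on $M_i$ consecutively from time $0$ without idle time in increasing index order; $C_j(\sigma)$ is the completion time of $j$. For $j\in S$ let $J_{i,j}(\sigma)=\{k\in S_i(\sigma):k\le j\}$ and $\Delta_{h,i,j}(\sigma)=P(J_{h,j}(\sigma))-P(J_{i,j}(\sigma))$. The swap: admissible for $\sigma$ at step $j^*$ with machines $M_h,M_i$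 if $j^*\in S_h(\sigma)$, $|S_i(\sigma)\setminus J_{i,j^*}(\sigma)|\ge 2p_{\max}$, and $\Delta_{h,i,j^*}(\sigma)\ge 4p_{\max}^2$. Let $J_I$ be the first (smallest-index) $2p_{\max}$ jobs of $S_i(\sigma)\setminus J_{i,j^*}(\sigma)$ and $J_H$ the last (largest-index) $2p_{\max}$ jobs of $J_{h,j^*}(\sigma)$; choose non-empty $J_{H'}\subseteq J_H$, $J_{I'}\subseteq J_I$ with $P(J_{H'})=P(J_{I'})$. The intermediate schedule $\sigma'$: on $M_h$ the time interval occupied by $J_H$ in $\sigma$ is filled by $J_H\setminus J_{H'}$ then $J_{I'}$; on $M_i$ the interval occupied by $J_I$ is filled by $J_{H'}$ then $J_I\setminus J_{I'}$ (each group in its order in $\sigma$); all other jobs keep their positions; no discarded job is scheduled. *)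

theory Defs
  imports Main
begin

text \<open>Jobs are natural numbers; machines are indexed 0,...,m-1 (M_1..M_m in the paper).
A (general) schedule assigns to every machine index the list of jobs processed on it,
consecutively from time 0 without idle time, in list order.\<close>

type_synonym schedule = "nat \<Rightarrow> nat list"

definition PP :: "(nat \<Rightarrow> nat) \<Rightarrow> nat set \<Rightarrow> nat" where
  "PP p X = (\<Sum>j\<in>X. p j)"

definition ctime :: "(nat \<Rightarrow> nat) \<Rightarrow> nat list \<Rightarrow> nat \<Rightarrow> nat" where
  "ctime p xs k = sum_list (map p (take (Suc k) xs))"

definition schedules :: "nat \<Rightarrow> schedule \<Rightarrow> nat set \<Rightarrow> bool" where
  "schedules m \<sigma> S \<longleftrightarrow> distinct (concat (map \<sigma> [0..<m])) \<and> set (concat (map \<sigma> [0..<m])) = S"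

definition proper :: "nat \<Rightarrow> schedule \<Rightarrow> nat set \<Rightarrow> bool" where
  "proper m \<sigma> S \<longleftrightarrow> schedules m \<sigma> S \<and> (\<forall>i<m. sorted_wrt (<) (\<sigma> i))"

definition on_time :: "nat \<Rightarrow> (nat \<Rightarrow> nat) \<Rightarrow> (nat \<Rightarrow> int) \<Rightarrow> schedule \<Rightarrow> bool" where
  "on_time m p d \<sigma> \<longleftrightarrow>
     (\<forall>i<m. \<forall>k<length (\<sigma> i). int (ctime p (\<sigma> i) k) \<le> d (\<sigma> i ! k))"

definition Jset :: "schedule \<Rightarrow> nat \<Rightarrow> nat \<Rightarrow> nat set" where
  "Jset \<sigma> i j = {k \<in> set (\<sigma> i). k \<le> j}"

definition Delta :: "(nat \<Rightarrow> nat) \<Rightarrow> schedule \<Rightarrow> nat \<Rightarrow> nat \<Rightarrow> nat \<Rightarrow> int" where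
  "Delta p \<sigma> h i j = int (PP p (Jset \<sigma> h j)) - int (PP p (Jset \<sigma> i j))"

definition admissible ::
  "nat \<Rightarrow> (nat \<Rightarrow> nat) \<Rightarrow> nat \<Rightarrow> schedule \<Rightarrow> nat \<Rightarrow> nat \<Rightarrow> nat \<Rightarrow> bool" where
  "admissible m p pmax \<sigma> js h i \<longleftrightarrow> h < m \<and> i < m \<and> js \<in> set (\<sigma> h) \<and>
     card (set (\<sigma> i) - Jset \<sigma> i js) \<ge> 2 * pmax \<and>
     Delta p \<sigma> h i js \<ge> 4 * int pmax ^ 2"

definition JI_list :: "nat \<Rightarrow> schedule \<Rightarrow> nat \<Rightarrow> nat \<Rightarrow> nat list" where
  "JI_list pmax \<sigma> js i = take (2 * pmax) (filter (\<lambda>k. js < k) (\<sigma> i))"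

definition JH_list :: "nat \<Rightarrow> schedule \<Rightarrow> nat \<Rightarrow> nat \<Rightarrow> nat list" where
  "JH_list pmax \<sigma> js h =
     (let L = filter (\<lambda>k. k \<le> js) (\<sigma> h) in drop (length L - 2 * pmax) L)"

text \<open>The intermediate schedule sigma' (defined for a proper sigma, where the machine
lists are sorted, so that J_H is a contiguous block ending at js on M_h and J_I the
contiguous block directly after J_{i,js} on M_i).\<close>
definition swap_sched ::
  "nat \<Rightarrow> schedule \<Rightarrow> nat \<Rightarrow> nat \<Rightarrow> nat \<Rightarrow> nat set \<Rightarrow> nat set \<Rightarrow> schedule" where
  "swap_sched pmax \<sigma> js h i H' I' = (\<lambda>g.
     (let JH = JH_list pmax \<sigma> js h; JI = JI_list pmax \<sigma> js i;
          Lh = filter (\<lambda>k. k \<le> js) (\<sigma> h); Rh = filter (\<lambda>k. js < k) (\<sigma> h);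
          Li = filter (\<lambda>k. k \<le> js) (\<sigma> i); Ri = filter (\<lambda>k. js < k) (\<sigma> i)
      in if g = h then
           take (length Lh - 2 * pmax) Lh @ filter (\<lambda>k. k \<notin> H') JH
             @ filter (\<lambda>k. k \<in> I') JI @ Rh
         else if g = i then
           Li @ filter (\<lambda>k. k \<in> H') JH @ filter (\<lambda>k. k \<notin> I') JI
             @ drop (2 * pmax) Ri
         else \<sigma> g))"

definition cost :: "nat \<Rightarrow> nat \<Rightarrow> (nat \<Rightarrow> nat) \<Rightarrow> schedule \<Rightarrow> nat" where
  "cost n m w \<sigma> = (\<Sum>j\<in>{1..n} - set (concat (map \<sigma> [0..<m])). w j)"

end

theory Submission
  imports Defs "HOL-Library.Multiset"
begin

text \<open>Since \<open>P(H') = P(I')\<close>, the two rearranged blocks have the same total length as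
\<open>J\<^sub>H\<close> and \<open>J\<^sub>I\<close>, so every job outside them keeps its completion time.
On \<open>M\<^sub>h\<close> the jobs of \<open>I'\<close> finish exactly when \<open>j*\<close> finished in \<open>\<sigma>\<close>, and having larger
index they have due date at least \<open>d\<^sub>j\<^sub>*\<close>.  On \<open>M\<^sub>i\<close> the whole new block finishes by
\<open>P(J\<^sub>i\<^sub>,\<^sub>j\<^sub>*) + P(J\<^sub>I) \<le> P(J\<^sub>i\<^sub>,\<^sub>j\<^sub>*) + 2p\<^sub>m\<^sub>a\<^sub>x\<^sup>2\<close>, and the gap
\<open>\<Delta> \<ge> 4p\<^sub>m\<^sub>a\<^sub>x\<^sup>2\<close> together with \<open>P(J\<^sub>H) \<le> 2p\<^sub>m\<^sub>a\<^sub>x\<^sup>2\<close> puts this before the start of \<open>J\<^sub>H\<close>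
on \<open>M\<^sub>h\<close>; every job of \<open>J\<^sub>H\<close> was on time after that start, and every job of \<open>J\<^sub>I\<close> is due
no earlier than \<open>j*\<close>.\<close>

abbreviation load :: "(nat \<Rightarrow> nat) \<Rightarrow> nat list \<Rightarrow> nat" where
  "load p xs \<equiv> sum_list (map p xs)"

definition on_time_from :: "(nat \<Rightarrow> nat) \<Rightarrow> (nat \<Rightarrow> int) \<Rightarrow> nat \<Rightarrow> nat list \<Rightarrow> bool" where
  "on_time_from p d t xs \<longleftrightarrow> (\<forall>k<length xs. int (t + ctime p xs k) \<le> d (xs ! k))"

lemma on_time_iff_on_time_from: "on_time m p d \<sigma> \<longleftrightarrow> (\<forall>g<m. on_time_from p d 0 (\<sigma> g))"
  by (simp add: on_time_def on_time_from_def)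

lemma on_time_from_Nil [simp]: "on_time_from p d t []"
  by (simp add: on_time_from_def)

lemma on_time_from_Cons [simp]:
  "on_time_from p d t (x # xs) \<longleftrightarrow> int (t + p x) \<le> d x \<and> on_time_from p d (t + p x) xs"
  by (auto simp: on_time_from_def ctime_def less_Suc_eq_0_disj add.assoc)

lemma on_time_from_append:
  "on_time_from p d t (xs @ ys) \<longleftrightarrow> on_time_from p d t xs \<and> on_time_from p d (t + load p xs) ys"
  by (induction xs arbitrary: t) (auto simp: add.assoc)

lemma on_time_from_antimono: "on_time_from p d t xs \<Longrightarrow> t' \<le> t \<Longrightarrow> on_time_from p d t' xs"
  unfolding on_time_from_def by force

lemma on_time_from_filter: "on_time_from p d t xs \<Longrightarrow> on_time_from p d t (filter P xs)"
proof (induction xs arbitrary: t)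
  case (Cons x xs)
  then show ?case using on_time_from_antimono[of p d "t + p x" xs t] by auto
qed simp

lemma on_time_from_start_le_due: "on_time_from p d t xs \<Longrightarrow> x \<in> set xs \<Longrightarrow> int t \<le> d x"
proof (induction xs arbitrary: t)
  case (Cons y xs)
  then show ?case using Cons.IH[of "t + p y"] by auto
qed simp

lemma on_time_from_if_finish_le_due:
  "(\<And>x. x \<in> set xs \<Longrightarrow> int (t + load p xs) \<le> d x) \<Longrightarrow> on_time_from p d t xs"
proof (induction xs arbitrary: t)
  case (Cons y xs)
  have "int (t + p y) \<le> d y" using Cons.prems[of y] by simp
  moreover have "on_time_from p d (t + p y) xs" using Cons by (simp add: add.assoc)
  ultimately show ?case by simp
qed simp

lemma finish_le_due_if_on_time_from:
  assumes "on_time_from p d t xs" "xs \<noteq> []" "\<And>y. y \<in> set xs \<Longrightarrow> d y \<le> D"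
  shows "int (t + load p xs) \<le> D"
  using assms
proof (induction xs arbitrary: t)
  case (Cons x xs)
  show ?case
  proof (cases "xs = []")
    case True
    with Cons.prems show ?thesis by force
  next
    case False
    with Cons show ?thesis using Cons.IH[of "t + p x"] by (simp add: add.assoc)
  qed
qed simp

lemma on_time_from_replace_block:
  assumes "on_time_from p d t (A @ X @ R)" "load p Y = load p X"
    and "on_time_from p d (t + load p A) Y"
  shows "on_time_from p d t (A @ Y @ R)"
  using assms by (simp add: on_time_from_append add.assoc)

lemma sorted_filter_le_append_filter_gt:
  "sorted_wrt (<) xs \<Longrightarrow> filter (\<lambda>k. k \<le> (j::nat)) xs @ filter (\<lambda>k. j < k) xs = xs"
proof (induction xs)
  case (Cons x xs)
  show ?case
  proof (cases "x \<le> j")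
    case False
    with Cons.prems have "\<forall>y\<in>set xs. j < y" by auto
    with False show ?thesis by (auto simp: filter_empty_conv filter_id_conv)
  qed (use Cons in simp)
qed simp

lemma load_filter_split: "load p (filter P xs) + load p (filter (\<lambda>x. \<not> P x) xs) = load p xs"
  by (induction xs) auto

lemma load_le_length_mult: "(\<And>x. x \<in> set xs \<Longrightarrow> p x \<le> b) \<Longrightarrow> load p xs \<le> length xs * b"
  using sum_list_mono[of xs p "\<lambda>_. b"] by (simp add: sum_list_triv)

lemma load_filter_mem_eq_PP:
  assumes "distinct xs" "H \<subseteq> set xs"
  shows "load p (filter (\<lambda>k. k \<in> H) xs) = PP p H"
proof -
  from assms(2) have "set (filter (\<lambda>k. k \<in> H) xs) = H" by auto
  with assms(1) show ?thesis by (metis PP_def distinct_filter sum_list_distinct_conv_sum_set)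
qed

lemma schedules_exchange_between_two_machines:
  assumes "schedules m \<sigma> S" "h < m" "i < m" "h \<noteq> i"
    and "\<And>g. g \<noteq> h \<Longrightarrow> g \<noteq> i \<Longrightarrow> \<sigma>' g = \<sigma> g"
    and "mset (\<sigma>' h) + mset (\<sigma>' i) = mset (\<sigma> h) + mset (\<sigma> i)"
  shows "schedules m \<sigma>' S"
proof -
  have split: "mset (concat (map \<tau> [0..<m]))
      = mset (\<tau> h) + mset (\<tau> i) + (\<Sum>g\<in>{0..<m} - {h, i}. mset (\<tau> g))" for \<tau> :: schedule
    using assms(2-4) by (simp add: mset_concat sum_list_distinct_conv_sum_set o_def
        sum.subset_diff[of "{h, i}" "{0..<m}"])
  have "mset (concat (map \<sigma>' [0..<m])) = mset (concat (map \<sigma> [0..<m]))"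
    unfolding split using assms(5,6) by simp
  with assms(1) show ?thesis
    unfolding schedules_def by (metis mset_eq_imp_distinct_iff mset_eq_setD)
qed

lemma cost_eq_if_schedules_same:
  "schedules m \<sigma> S \<Longrightarrow> schedules m \<sigma>' S \<Longrightarrow> cost n m w \<sigma>' = cost n m w \<sigma>"
  by (simp add: cost_def schedules_def)

locale admissible_swap =
  fixes m :: nat and p :: "nat \<Rightarrow> nat" and d :: "nat \<Rightarrow> int" and S :: "nat set"
    and \<sigma> :: schedule and pm js h i :: nat and H' I' :: "nat set"
  assumes proper: "proper m \<sigma> S"
    and on_time: "on_time m p d \<sigma>"
    and h_lt: "h < m" and i_lt: "i < m" and h_neq_i: "h \<noteq> i"
    and js_on_h: "js \<in> set (\<sigma> h)"
    and Delta_ge: "4 * int pm ^ 2 \<le> Delta p \<sigma> h i js"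
    and H'_sub: "H' \<subseteq> set (JH_list pm \<sigma> js h)"
    and I'_sub: "I' \<subseteq> set (JI_list pm \<sigma> js i)"
    and PP_eq: "PP p H' = PP p I'"
    and p_le_pm: "\<And>x. x \<in> S \<Longrightarrow> p x \<le> pm"
    and d_mono: "\<And>x y. x \<in> S \<Longrightarrow> y \<in> S \<Longrightarrow> x \<le> y \<Longrightarrow> d x \<le> d y"
begin

abbreviation JH :: "nat list" where "JH \<equiv> JH_list pm \<sigma> js h"
abbreviation JI :: "nat list" where "JI \<equiv> JI_list pm \<sigma> js i"
abbreviation \<sigma>' :: schedule where "\<sigma>' \<equiv> swap_sched pm \<sigma> js h i H' I'"

definition before_JH :: "nat list" where
  "before_JH = (let L = filter (\<lambda>k. k \<le> js) (\<sigma> h) in take (length L - 2 * pm) L)"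

definition after_JH :: "nat list" where
  "after_JH = filter (\<lambda>k. js < k) (\<sigma> h)"

definition before_JI :: "nat list" where
  "before_JI = filter (\<lambda>k. k \<le> js) (\<sigma> i)"

definition after_JI :: "nat list" where
  "after_JI = drop (2 * pm) (filter (\<lambda>k. js < k) (\<sigma> i))"

lemma distinct_machine: "g < m \<Longrightarrow> distinct (\<sigma> g)"
  using proper by (auto simp: proper_def schedules_def distinct_concat_iff)

lemma set_machine_subset: "g < m \<Longrightarrow> set (\<sigma> g) \<subseteq> S"
  using proper by (auto simp: proper_def schedules_def)

lemma sorted_machine: "g < m \<Longrightarrow> sorted_wrt (<) (\<sigma> g)"
  using proper by (simp add: proper_def)

lemma jobs_upto_js_h: "filter (\<lambda>k. k \<le> js) (\<sigma> h) = before_JH @ JH"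
  by (simp add: before_JH_def JH_list_def Let_def)

lemma machine_h_blocks: "\<sigma> h = before_JH @ JH @ after_JH"
  using sorted_filter_le_append_filter_gt[OF sorted_machine[OF h_lt], of js]
  by (simp add: after_JH_def jobs_upto_js_h)

lemma machine_i_blocks: "\<sigma> i = before_JI @ JI @ after_JI"
  using sorted_filter_le_append_filter_gt[OF sorted_machine[OF i_lt], of js]
  by (simp add: before_JI_def after_JI_def JI_list_def)

lemma swap_sched_h:
  "\<sigma>' h = before_JH @ (filter (\<lambda>k. k \<notin> H') JH @ filter (\<lambda>k. k \<in> I') JI) @ after_JH"
  by (simp add: swap_sched_def before_JH_def after_JH_def JH_list_def Let_def)

lemma swap_sched_i:
  "\<sigma>' i = before_JI @ (filter (\<lambda>k. k \<in> H') JH @ filter (\<lambda>k. k \<notin> I') JI) @ after_JI"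
  using h_neq_i by (simp add: swap_sched_def before_JI_def after_JI_def Let_def)

lemma swap_sched_other: "g \<noteq> h \<Longrightarrow> g \<noteq> i \<Longrightarrow> \<sigma>' g = \<sigma> g"
  by (simp add: swap_sched_def)

lemma schedules_swap: "schedules m \<sigma>' S"
proof (rule schedules_exchange_between_two_machines[OF _ h_lt i_lt h_neq_i swap_sched_other])
  show "schedules m \<sigma> S" using proper by (simp add: proper_def)
  show "mset (\<sigma>' h) + mset (\<sigma>' i) = mset (\<sigma> h) + mset (\<sigma> i)"
    unfolding swap_sched_h swap_sched_i machine_h_blocks machine_i_blocks
    by (simp add: multiset_eq_iff)
qed

lemma on_time_machine: "g < m \<Longrightarrow> on_time_from p d 0 (\<sigma> g)"
  using on_time by (simp add: on_time_iff_on_time_from)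

lemma load_le_if_short:
  assumes "set xs \<subseteq> S" "length xs \<le> 2 * pm"
  shows "load p xs \<le> 2 * pm ^ 2"
proof -
  have "load p xs \<le> length xs * pm"
    using assms(1) by (intro load_le_length_mult) (auto intro: p_le_pm)
  also have "\<dots> \<le> 2 * pm * pm"
    using assms(2) by simp
  finally show ?thesis by (simp add: power2_eq_square)
qed

lemma load_JH_le: "load p JH \<le> 2 * pm ^ 2"
proof (rule load_le_if_short)
  show "set JH \<subseteq> S"
    using set_machine_subset[OF h_lt] by (auto simp: JH_list_def Let_def dest!: in_set_dropD)
  show "length JH \<le> 2 * pm" by (simp add: JH_list_def Let_def)
qed

lemma load_JI_le: "load p JI \<le> 2 * pm ^ 2"
proof (rule load_le_if_short)
  show "set JI \<subseteq> S"
    using set_machine_subset[OF i_lt] by (auto simp: JI_list_def dest!: in_set_takeD)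
  show "length JI \<le> 2 * pm" by (simp add: JI_list_def)
qed

lemma PP_Jset_js: "g < m \<Longrightarrow> PP p (Jset \<sigma> g js) = load p (filter (\<lambda>k. k \<le> js) (\<sigma> g))"
  using distinct_machine by (simp add: PP_def Jset_def sum_list_distinct_conv_sum_set)

lemma load_before_JI_le: "load p before_JI + 2 * pm ^ 2 \<le> load p before_JH"
proof -
  have "int (load p before_JI) + 4 * int (pm ^ 2) \<le> int (load p before_JH) + int (load p JH)"
    using Delta_ge PP_Jset_js[OF h_lt] PP_Jset_js[OF i_lt]
    by (simp add: Delta_def jobs_upto_js_h before_JI_def)
  then show ?thesis using load_JH_le by linarith
qed

lemma load_swapped_blocks:
  "load p (filter (\<lambda>k. k \<notin> H') JH @ filter (\<lambda>k. k \<in> I') JI) = load p JH"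
  "load p (filter (\<lambda>k. k \<in> H') JH @ filter (\<lambda>k. k \<notin> I') JI) = load p JI"
proof -
  have "distinct JH" "distinct JI"
    using distinct_machine[OF h_lt] distinct_machine[OF i_lt] machine_h_blocks machine_i_blocks
    by (metis distinct_append)+
  then have "load p (filter (\<lambda>k. k \<in> H') JH) = load p (filter (\<lambda>k. k \<in> I') JI)"
    using H'_sub I'_sub PP_eq by (simp add: load_filter_mem_eq_PP)
  then show
    "load p (filter (\<lambda>k. k \<notin> H') JH @ filter (\<lambda>k. k \<in> I') JI) = load p JH"
    "load p (filter (\<lambda>k. k \<in> H') JH @ filter (\<lambda>k. k \<notin> I') JI) = load p JI"
    using load_filter_split[of p "\<lambda>k. k \<in> H'" JH] load_filter_split[of p "\<lambda>k. k \<in> I'" JI]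
    by simp_all
qed

lemma on_time_machine_h_blocks: "on_time_from p d 0 (before_JH @ JH @ after_JH)"
  using on_time_machine[OF h_lt] machine_h_blocks by metis

lemma completion_js_le_due: "int (load p before_JH + load p JH) \<le> d js"
proof -
  have "on_time_from p d 0 (before_JH @ JH)"
    using on_time_machine_h_blocks by (simp add: on_time_from_append)
  moreover have "before_JH @ JH \<noteq> []"
    using js_on_h by (auto simp: filter_empty_conv simp flip: jobs_upto_js_h)
  moreover have "d y \<le> d js" if "y \<in> set (before_JH @ JH)" for y
    using that js_on_h set_machine_subset[OF h_lt] by (auto simp flip: jobs_upto_js_h intro: d_mono)
  ultimately show ?thesis
    using finish_le_due_if_on_time_from[of p d 0 "before_JH @ JH" "d js"] by simp
qed

lemma due_JI_ge_due_js: "x \<in> set JI \<Longrightarrow> d js \<le> d x"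
proof -
  assume "x \<in> set JI"
  then have "js < x" "x \<in> S"
    using set_machine_subset[OF i_lt] by (auto simp: JI_list_def dest!: in_set_takeD)
  moreover have "js \<in> S" using js_on_h set_machine_subset[OF h_lt] by auto
  ultimately show ?thesis using d_mono by simp
qed

lemma due_ge_start_of_JH: "x \<in> set JH \<union> set JI \<Longrightarrow> int (load p before_JH) \<le> d x"
proof (elim UnE)
  assume "x \<in> set JH"
  moreover have "on_time_from p d (load p before_JH) JH"
    using on_time_machine_h_blocks by (simp add: on_time_from_append)
  ultimately show ?thesis by (rule on_time_from_start_le_due[rotated])
next
  assume "x \<in> set JI"
  then show ?thesis using completion_js_le_due due_JI_ge_due_js by fastforce
qed

lemma on_time_swap_h: "on_time_from p d 0 (\<sigma>' h)"
  unfolding swap_sched_h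
proof (rule on_time_from_replace_block[where X = JH])
  show "on_time_from p d 0 (before_JH @ JH @ after_JH)"
    by (rule on_time_machine_h_blocks)
  show "load p (filter (\<lambda>k. k \<notin> H') JH @ filter (\<lambda>k. k \<in> I') JI) = load p JH"
    by (rule load_swapped_blocks(1))
  have "on_time_from p d (load p before_JH) (filter (\<lambda>k. k \<notin> H') JH)"
    using on_time_machine_h_blocks by (simp add: on_time_from_append on_time_from_filter)
  moreover have "on_time_from p d (load p before_JH + load p (filter (\<lambda>k. k \<notin> H') JH))
      (filter (\<lambda>k. k \<in> I') JI)"
  proof (rule on_time_from_if_finish_le_due)
    fix x assume "x \<in> set (filter (\<lambda>k. k \<in> I') JI)"
    then have "d js \<le> d x" by (simp add: due_JI_ge_due_js)
    with completion_js_le_due load_swapped_blocks(1)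
    show "int (load p before_JH + load p (filter (\<lambda>k. k \<notin> H') JH)
        + load p (filter (\<lambda>k. k \<in> I') JI)) \<le> d x"
      by simp
  qed
  ultimately show "on_time_from p d (0 + load p before_JH)
      (filter (\<lambda>k. k \<notin> H') JH @ filter (\<lambda>k. k \<in> I') JI)"
    by (simp add: on_time_from_append)
qed

lemma on_time_swap_i: "on_time_from p d 0 (\<sigma>' i)"
  unfolding swap_sched_i
proof (rule on_time_from_replace_block[where X = JI])
  show "on_time_from p d 0 (before_JI @ JI @ after_JI)"
    using on_time_machine[OF i_lt] machine_i_blocks by metis
  show "load p (filter (\<lambda>k. k \<in> H') JH @ filter (\<lambda>k. k \<notin> I') JI) = load p JI"
    by (rule load_swapped_blocks(2))
  show "on_time_from p d (0 + load p before_JI)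
      (filter (\<lambda>k. k \<in> H') JH @ filter (\<lambda>k. k \<notin> I') JI)"
  proof (rule on_time_from_if_finish_le_due)
    fix x assume "x \<in> set (filter (\<lambda>k. k \<in> H') JH @ filter (\<lambda>k. k \<notin> I') JI)"
    then have "int (load p before_JH) \<le> d x" by (auto intro: due_ge_start_of_JH)
    with load_before_JI_le load_JI_le load_swapped_blocks(2)
    show "int (0 + load p before_JI
        + load p (filter (\<lambda>k. k \<in> H') JH @ filter (\<lambda>k. k \<notin> I') JI)) \<le> d x"
      by simp
  qed
qed

lemma on_time_swap: "on_time m p d \<sigma>'"
  unfolding on_time_iff_on_time_from
  using on_time_swap_h on_time_swap_i on_time_machine swap_sched_other by metis

end

theorem lemma8:
  fixes n m :: nat and p :: "nat \<Rightarrow> nat" and w :: "nat \<Rightarrow> nat" and d :: "nat \<Rightarrow> int"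
    and S :: "nat set" and \<sigma> :: schedule and js h i :: nat and H' I' :: "nat set"
  assumes m_pos: "m \<ge> 1"
    and p_pos: "\<forall>j\<in>{1..n}. p j > 0"
    and d_sorted: "\<forall>j\<in>{1..n}. \<forall>k\<in>{1..n}. j \<le> k \<longrightarrow> d j \<le> d k"
    and S_sub: "S \<subseteq> {1..n}"
    and proper: "proper m \<sigma> S"
    and feasible: "on_time m p d \<sigma>"
    and adm: "admissible m p (Max (p ` {1..n})) \<sigma> js h i"
    and H'_sub: "H' \<subseteq> set (JH_list (Max (p ` {1..n})) \<sigma> js h)" and H'_ne: "H' \<noteq> {}"
    and I'_sub: "I' \<subseteq> set (JI_list (Max (p ` {1..n})) \<sigma> js i)"
    and PP_eq: "PP p H' = PP p I'"
  shows "schedules m (swap_sched (Max (p ` {1..n})) \<sigma> js h i H' I') S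
       \<and> on_time m p d (swap_sched (Max (p ` {1..n})) \<sigma> js h i H' I')
       \<and> cost n m w (swap_sched (Max (p ` {1..n})) \<sigma> js h i H' I') \<le> cost n m w \<sigma>"
proof -
  let ?pm = "Max (p ` {1..n})"
  have h_lt: "h < m" and i_lt: "i < m" and js_on_h: "js \<in> set (\<sigma> h)"
    and Delta_ge: "4 * int ?pm ^ 2 \<le> Delta p \<sigma> h i js"
    using adm by (auto simp: admissible_def)
  have js_in_S: "js \<in> S"
    using proper h_lt js_on_h by (auto simp: proper_def schedules_def)
  have p_le_pm: "p x \<le> ?pm" if "x \<in> S" for x
    using that S_sub by (auto intro: Max_ge)
  have d_mono: "d x \<le> d y" if "x \<in> S" "y \<in> S" "x \<le> y" for x y
    using d_sorted S_sub that by blast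
  have "h \<noteq> i"
  proof
    assume "h = i"
    with Delta_ge have "?pm = 0" by (simp add: Delta_def)
    with p_le_pm[OF js_in_S] p_pos js_in_S S_sub show False by fastforce
  qed
  then interpret admissible_swap m p d S \<sigma> ?pm js h i H' I'
    using proper feasible h_lt i_lt js_on_h Delta_ge H'_sub I'_sub PP_eq p_le_pm d_mono
    by unfold_locales
  have "schedules m \<sigma> S" using proper by (simp add: proper_def)
  then have "cost n m w (swap_sched ?pm \<sigma> js h i H' I') = cost n m w \<sigma>"
    using schedules_swap by (rule cost_eq_if_schedules_same)
  with schedules_swap on_time_swap show ?thesis by simp
qed

end
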